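(* Let $s,t\ge1$ and let $f=(f_1,\dots,f_{t+1}):\Delta^s\to\Delta^t$. If some finite automaton over the alphabet $\{1,\dots,s+1\}$ simulates $f$, then each $f_j$ is a rational function with rational coefficients on $\Delta^s$: there exist $g_j,h_j\in\mathbb Z[x_1,\dots,x_{s+1}]$ with $h_j(p)\neq0$ and $f_j(p)=g_j(p)/h_j(p)$ for all $p\in\Delta^s$.
   Context: $\Delta^s=\{p\in(0,1)^{s+1}:\sum_{i=1}^{s+1}p_i=1\}$ is the open simplex of probability vectors. For a word $w$ over the alphabet $\{1,\dots,s+1\}$ let $n_i(w)$ be the number of occurrences of $i$, and for $p\in\Delta^s$ put $\mathbf P_p[w]=\prod_i p_i^{n_i(w)}$, $\mathbf P_p[L]=\sum_{w\in L}\mathbf P_p[w]$ (the law of i.i.d. letters with distribution $p$). A simulation of $f=(f_1,\dots,f_{t+1}):\Delta^s\to\Delta^t$ is a tuple of pairwise disjoint languages $L_1,\dots,L_{t+1}$ over $\{1,\dots,s+1\}$ whose union is prefix-free (no word is a proper prefix of another) such that $\mathbf P_p[L_j]=f_j(p)$ for all $p\in\Delta^s$ and all $j$. A finite automaton over this alphabet consists of a finite state set $S$, a start state $s_0$, a transition function $\delta:S\times\{1,\dots,s+1\}\to S$ (extended to words), and pairwise disjoint absorbing final-state sets $S_1,\dots,S_{t+1}$; $L_j$ is the set of words $w$ with $\delta(s_0,w)\in S_j$ and no proper prefix of $w$ leading into a final state. The automaton simulates $f$ if $(L_1,\dots,L_{t+1})$ is a simulation of $f$. *)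

theory Defs
  imports "HOL-Analysis.Analysis"
begin

definition alphabet :: "nat \<Rightarrow> nat set" where
  "alphabet n = {1..n+1}"

definition open_simplex :: "nat \<Rightarrow> (nat \<Rightarrow> real) set" where
  "open_simplex n = {p. (\<forall>i\<in>{1..n+1}. 0 < p i \<and> p i < 1) \<and> (\<forall>i. i \<notin> {1..n+1} \<longrightarrow> p i = 0)
                  \<and> (\<Sum>i=1..n+1. p i) = 1}"

definition word_prob :: "(nat \<Rightarrow> real) \<Rightarrow> nat list \<Rightarrow> real" where
  "word_prob p w = prod_list (map p w)"

definition prefix_free :: "'a list set \<Rightarrow> bool" where
  "prefix_free U \<longleftrightarrow> (\<forall>u\<in>U. \<forall>v\<in>U. \<not> (\<exists>z. z \<noteq> [] \<and> v = u @ z))"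

text \<open>A simulation of f : Delta^s -> Delta^t (components f 1, ..., f (t+1)) by languages L 1, ..., L (t+1).
  P_p[L j] = f j p is expressed as a convergent (unordered) sum.\<close>
definition simulation ::
  "nat \<Rightarrow> nat \<Rightarrow> (nat \<Rightarrow> (nat \<Rightarrow> real) \<Rightarrow> real) \<Rightarrow> (nat \<Rightarrow> nat list set) \<Rightarrow> bool" where
  "simulation s t f L \<longleftrightarrow>
     (\<forall>j\<in>{1..t+1}. \<forall>w\<in>L j. set w \<subseteq> alphabet s)
   \<and> (\<forall>j\<in>{1..t+1}. \<forall>k\<in>{1..t+1}. j \<noteq> k \<longrightarrow> L j \<inter> L k = {})
   \<and> prefix_free (\<Union>j\<in>{1..t+1}. L j)
   \<and> (\<forall>p\<in>open_simplex s. \<forall>j\<in>{1..t+1}. (word_prob p has_sum f j p) (L j))"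

definition is_automaton ::
  "nat \<Rightarrow> nat \<Rightarrow> 'q set \<Rightarrow> 'q \<Rightarrow> ('q \<Rightarrow> nat \<Rightarrow> 'q) \<Rightarrow> (nat \<Rightarrow> 'q set) \<Rightarrow> bool" where
  "is_automaton s t S q0 \<delta> SF \<longleftrightarrow>
     finite S \<and> q0 \<in> S
   \<and> (\<forall>q\<in>S. \<forall>a\<in>alphabet s. \<delta> q a \<in> S)
   \<and> (\<forall>j\<in>{1..t+1}. SF j \<subseteq> S)
   \<and> (\<forall>j\<in>{1..t+1}. \<forall>k\<in>{1..t+1}. j \<noteq> k \<longrightarrow> SF j \<inter> SF k = {})
   \<and> (\<forall>j\<in>{1..t+1}. \<forall>q\<in>SF j. \<forall>a\<in>alphabet s. \<delta> q a \<in> SF j)"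

definition run :: "('q \<Rightarrow> nat \<Rightarrow> 'q) \<Rightarrow> 'q \<Rightarrow> nat list \<Rightarrow> 'q" where
  "run \<delta> q w = foldl \<delta> q w"

definition automaton_lang ::
  "nat \<Rightarrow> nat \<Rightarrow> 'q \<Rightarrow> ('q \<Rightarrow> nat \<Rightarrow> 'q) \<Rightarrow> (nat \<Rightarrow> 'q set) \<Rightarrow> nat \<Rightarrow> nat list set" where
  "automaton_lang s t q0 \<delta> SF j =
     {w. set w \<subseteq> alphabet s \<and> run \<delta> q0 w \<in> SF j
         \<and> (\<forall>k<length w. run \<delta> q0 (take k w) \<notin> (\<Union>i\<in>{1..t+1}. SF i))}"

definition automaton_simulates ::
  "nat \<Rightarrow> nat \<Rightarrow> 'q set \<Rightarrow> 'q \<Rightarrow> ('q \<Rightarrow> nat \<Rightarrow> 'q) \<Rightarrow> (nat \<Rightarrow> 'q set)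
     \<Rightarrow> (nat \<Rightarrow> (nat \<Rightarrow> real) \<Rightarrow> real) \<Rightarrow> bool" where
  "automaton_simulates s t S q0 \<delta> SF f \<longleftrightarrow>
     is_automaton s t S q0 \<delta> SF \<and> simulation s t f (automaton_lang s t q0 \<delta> SF)"

text \<open>Polynomial functions with integer coefficients in the variables x_1, ..., x_n,
  i.e. the evaluation maps of elements of Z[x_1,...,x_n].\<close>
inductive_set int_poly_fun :: "nat \<Rightarrow> ((nat \<Rightarrow> real) \<Rightarrow> real) set" for n :: nat where
  const: "(\<lambda>x. real_of_int c) \<in> int_poly_fun n"
| var: "i \<in> {1..n} \<Longrightarrow> (\<lambda>x. x i) \<in> int_poly_fun n"
| add: "g \<in> int_poly_fun n \<Longrightarrow> h \<in> int_poly_fun n \<Longrightarrow> (\<lambda>x. g x + h x) \<in> int_poly_fun n"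
| mult: "g \<in> int_poly_fun n \<Longrightarrow> h \<in> int_poly_fun n \<Longrightarrow> (\<lambda>x. g x * h x) \<in> int_poly_fun n"

end

theory Submission
  imports Defs "Jordan_Normal_Form.Determinant"
begin

text \<open>Read the automaton as a Markov chain whose transitions are the letters, taken with
  probabilities \<open>p\<close>. Then \<open>f\<^sub>j(p)\<close> is the probability of being absorbed in \<open>SF j\<close> when started in
  \<open>q0\<close>. On the states that are reachable without absorption and from which absorption is
  possible, first-step analysis shows that these absorption probabilities solve a linear system
  \<open>(I - Q) X = b\<close>, where \<open>Q\<close> is the substochastic transition matrix among those states and \<open>b\<close>
  the one-step absorption probabilities; all entries are integer polynomials in \<open>p\<close>. Since
  every such state can escape, a maximum principle makes \<open>I - Q\<close> nonsingular, and Cramer's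
  rule writes \<open>f\<^sub>j(p)\<close> as a quotient of two determinants, which are integer polynomials in \<open>p\<close>.\<close>

section \<open>Integer polynomial functions\<close>

lemma int_poly_fun_sum:
  assumes "finite I" and "\<And>i. i \<in> I \<Longrightarrow> g i \<in> int_poly_fun n"
  shows "(\<lambda>x. \<Sum>i\<in>I. g i x) \<in> int_poly_fun n"
  using assms
proof (induction I rule: finite_induct)
  case empty
  show ?case using int_poly_fun.const[of 0 n] by simp
next
  case (insert a I)
  have "(\<lambda>x. g a x + (\<Sum>i\<in>I. g i x)) \<in> int_poly_fun n"
    using insert by (intro int_poly_fun.add) auto
  with insert.hyps show ?case by simp
qed

lemma int_poly_fun_prod:
  assumes "finite I" and "\<And>i. i \<in> I \<Longrightarrow> g i \<in> int_poly_fun n"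
  shows "(\<lambda>x. \<Prod>i\<in>I. g i x) \<in> int_poly_fun n"
  using assms
proof (induction I rule: finite_induct)
  case empty
  show ?case using int_poly_fun.const[of 1 n] by simp
next
  case (insert a I)
  have "(\<lambda>x. g a x * (\<Prod>i\<in>I. g i x)) \<in> int_poly_fun n"
    using insert by (intro int_poly_fun.mult) auto
  with insert.hyps show ?case by simp
qed

lemma int_poly_fun_diff:
  assumes "g \<in> int_poly_fun n" and "h \<in> int_poly_fun n"
  shows "(\<lambda>x. g x - h x) \<in> int_poly_fun n"
proof -
  have "(\<lambda>x. g x + (\<lambda>x. real_of_int (-1)) x * h x) \<in> int_poly_fun n"
    by (intro int_poly_fun.add int_poly_fun.mult assms int_poly_fun.const)
  then show ?thesis by simp
qed

lemma int_poly_fun_det: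
  assumes carrier: "\<And>x. M x \<in> carrier_mat m m"
    and entries: "\<And>i k. i < m \<Longrightarrow> k < m \<Longrightarrow> (\<lambda>x. M x $$ (i, k)) \<in> int_poly_fun n"
  shows "(\<lambda>x. det (M x) :: real) \<in> int_poly_fun n"
proof -
  have "(\<lambda>x. det (M x)) = (\<lambda>x. \<Sum>\<pi>\<in>{\<pi>. \<pi> permutes {0..<m}}.
          of_int (sign \<pi>) * (\<Prod>i=0..<m. M x $$ (i, \<pi> i)))"
    by (intro ext) (simp add: det_def carrier_matD[OF carrier])
  also have "\<dots> \<in> int_poly_fun n"
  proof (rule int_poly_fun_sum)
    fix \<pi> assume "\<pi> \<in> {\<pi>. \<pi> permutes {0..<m}}"
    then have "\<pi> i < m" if "i < m" for i
      using permutes_in_image[of \<pi> "{0..<m}" i] that by simp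
    then show "(\<lambda>x. of_int (sign \<pi>) * (\<Prod>i=0..<m. M x $$ (i, \<pi> i))) \<in> int_poly_fun n"
      by (intro int_poly_fun.mult int_poly_fun.const int_poly_fun_prod) (auto intro: entries)
  qed (simp add: finite_permutations)
  finally show ?thesis .
qed

lemma cramer_numerator_int_poly_fun:
  assumes carrier: "\<And>x. M x \<in> carrier_mat m m"
    and entries: "\<And>i k. i < m \<Longrightarrow> k < m \<Longrightarrow> (\<lambda>x. M x $$ (i, k)) \<in> int_poly_fun n"
    and rhs: "\<And>i. i < m \<Longrightarrow> (\<lambda>x. vec_index (b x) i) \<in> int_poly_fun n"
    and "k < m"
  shows "\<exists>g \<in> int_poly_fun n. \<forall>x v. v \<in> carrier_vec m \<longrightarrow> M x *\<^sub>v v = b x \<longrightarrow>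
           g x = vec_index v k * det (M x)"
proof -
  let ?g = "\<lambda>x. det (replace_col (M x) (b x) k)"
  have "?g x = vec_index v k * det (M x)" if "v \<in> carrier_vec m" and "M x *\<^sub>v v = b x" for x v
  proof -
    have "det (replace_col (M x) (M x *\<^sub>v v) k) = vec_index v k * det (M x)"
      by (rule cramer_lemma_mat[OF carrier that(1) \<open>k < m\<close>])
    then show ?thesis
      by (simp only: that(2))
  qed
  moreover have "?g \<in> int_poly_fun n"
  proof (rule int_poly_fun_det)
    show "replace_col (M x) (b x) k \<in> carrier_mat m m" for x
      using carrier_matD[OF carrier] by (simp add: replace_col_def)
    fix i l assume "i < m" "l < m"
    then have "(\<lambda>x. replace_col (M x) (b x) k $$ (i, l)) =
               (\<lambda>x. if l = k then vec_index (b x) i else M x $$ (i, l))"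
      using carrier_matD[OF carrier] by (simp add: replace_col_def)
    also have "\<dots> \<in> int_poly_fun n"
      using \<open>i < m\<close> \<open>l < m\<close> by (cases "l = k") (simp_all add: entries rhs)
    finally show "(\<lambda>x. replace_col (M x) (b x) k $$ (i, l)) \<in> int_poly_fun n" .
  qed
  ultimately show ?thesis
    by (intro bexI[of _ ?g]) auto
qed

section \<open>Absorption in a finite Markov chain\<close>

lemma run_Nil [simp]: "run \<delta> q [] = q"
  by (simp add: run_def)

lemma run_Cons [simp]: "run \<delta> q (a # w) = run \<delta> (\<delta> q a) w"
  by (simp add: run_def)

text \<open>Letter \<open>a \<in> A\<close> moves state \<open>q\<close> to \<open>\<delta> q a\<close> with probability \<open>p a\<close>.\<close>

locale absorbing_chain =
  fixes A :: "nat set" and \<delta> :: "'q \<Rightarrow> nat \<Rightarrow> 'q" and T :: "'q set"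
  assumes finite_A: "finite A" and finite_T: "finite T"
    and escape: "\<And>q. q \<in> T \<Longrightarrow> \<exists>v. set v \<subseteq> A \<and> run \<delta> q v \<notin> T"
begin

definition transient_kernel :: "(nat \<Rightarrow> real) \<Rightarrow> ('q \<Rightarrow> real) \<Rightarrow> 'q \<Rightarrow> real" where
  "transient_kernel p Y q = (\<Sum>a\<in>A. p a * (if \<delta> q a \<in> T then Y (\<delta> q a) else 0))"

definition exit_prob :: "'q set \<Rightarrow> (nat \<Rightarrow> real) \<Rightarrow> 'q \<Rightarrow> real" where
  "exit_prob B p q = (\<Sum>a\<in>A. p a * of_bool (\<delta> q a \<in> B - T))"

lemma transient_kernel_max_step:
  assumes pos: "\<And>a. a \<in> A \<Longrightarrow> 0 < p a" and sum_le: "sum p A \<le> 1"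
    and fixpoint: "\<And>q. q \<in> T \<Longrightarrow> Y q = transient_kernel p Y q"
    and max: "\<And>q. q \<in> T \<Longrightarrow> Y q \<le> M" and "0 < M"
    and "r \<in> T" "Y r = M" "a \<in> A"
  shows "\<delta> r a \<in> T \<and> Y (\<delta> r a) = M"
proof -
  define z where "z b = (if \<delta> r b \<in> T then Y (\<delta> r b) else 0)" for b
  have nonneg: "0 \<le> p b * (M - z b)" if "b \<in> A" for b
  proof -
    have "z b \<le> M"
      using max \<open>0 < M\<close> by (simp add: z_def)
    then show ?thesis
      using pos[OF that] by (metis diff_ge_0_iff_ge less_imp_le mult_nonneg_nonneg)
  qed
  have "(\<Sum>b\<in>A. p b * (M - z b)) = sum p A * M - (\<Sum>b\<in>A. p b * z b)"
    by (simp add: right_diff_distrib sum_subtractf sum_distrib_right)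
  also have "(\<Sum>b\<in>A. p b * z b) = M"
    using fixpoint[OF \<open>r \<in> T\<close>] \<open>Y r = M\<close> by (simp add: transient_kernel_def z_def)
  also have "sum p A * M - M \<le> 0"
    using mult_right_mono[OF sum_le, of M] \<open>0 < M\<close> by linarith
  finally have "(\<Sum>b\<in>A. p b * (M - z b)) \<le> 0" .
  moreover have "0 \<le> (\<Sum>b\<in>A. p b * (M - z b))"
    using nonneg by (rule sum_nonneg)
  ultimately have "(\<Sum>b\<in>A. p b * (M - z b)) = 0"
    by linarith
  then have "p a * (M - z a) = 0"
    using sum_nonneg_eq_0_iff[OF finite_A, of "\<lambda>b. p b * (M - z b)"] nonneg \<open>a \<in> A\<close> by blast
  then have "z a = M"
    using pos[OF \<open>a \<in> A\<close>] by simp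
  moreover have "\<delta> r a \<in> T"
  proof (rule ccontr)
    assume "\<delta> r a \<notin> T"
    then have "z a = 0"
      by (simp add: z_def)
    with \<open>z a = M\<close> \<open>0 < M\<close> show False
      by simp
  qed
  ultimately show ?thesis
    by (simp add: z_def)
qed

text \<open>Maximum principle: a positive maximum of a fixpoint propagates to every successor, hence
  along a path leaving \<open>T\<close>, which is impossible.\<close>

lemma transient_fixpoint_nonpos:
  assumes pos: "\<And>a. a \<in> A \<Longrightarrow> 0 < p a" and sum_le: "sum p A \<le> 1"
    and fixpoint: "\<And>q. q \<in> T \<Longrightarrow> Y q = transient_kernel p Y q" and "q \<in> T"
  shows "Y q \<le> 0"
proof (rule ccontr)
  assume "\<not> Y q \<le> 0"
  define M where "M = Max (Y ` T)"
  have max: "\<And>q. q \<in> T \<Longrightarrow> Y q \<le> M"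
    using finite_T by (simp add: M_def)
  have "M \<in> Y ` T"
    unfolding M_def using finite_T \<open>q \<in> T\<close> by (intro Max_in) auto
  then obtain r where r: "r \<in> T" "Y r = M"
    by (metis imageE)
  have "0 < M"
    using max[OF \<open>q \<in> T\<close>] \<open>\<not> Y q \<le> 0\<close> by linarith
  have "run \<delta> r v \<in> T \<and> Y (run \<delta> r v) = M" if "set v \<subseteq> A" for v
    using that r
  proof (induction v arbitrary: r)
    case (Cons a v)
    then show ?case
      using transient_kernel_max_step[OF pos sum_le fixpoint max \<open>0 < M\<close>, of r a] by simp
  qed simp
  then show False
    using escape[OF \<open>r \<in> T\<close>] by blast
qed

lemma transient_fixpoint_eq_0:
  assumes pos: "\<And>a. a \<in> A \<Longrightarrow> 0 < p a" and sum_le: "sum p A \<le> 1"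
    and fixpoint: "\<And>q. q \<in> T \<Longrightarrow> Y q = transient_kernel p Y q" and "q \<in> T"
  shows "Y q = 0"
proof -
  have "transient_kernel p (\<lambda>q. - Y q) q' = - transient_kernel p Y q'" for q'
    unfolding transient_kernel_def sum_negf[symmetric] by (rule sum.cong) auto
  then have "- Y q' = transient_kernel p (\<lambda>q. - Y q) q'" if "q' \<in> T" for q'
    using fixpoint[OF that] by simp
  then have "- Y q \<le> 0"
    using transient_fixpoint_nonpos[OF pos sum_le _ \<open>q \<in> T\<close>, of "\<lambda>q. - Y q"] by simp
  moreover have "Y q \<le> 0"
    using transient_fixpoint_nonpos[OF pos sum_le fixpoint \<open>q \<in> T\<close>] .
  ultimately show ?thesis by simp
qed

text \<open>The matrix \<open>I - Q\<close> of the transient kernel and the exit vector into \<open>B\<close>, with respect to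
  an enumeration \<open>e\<close> of \<open>T\<close> by \<open>{0..<n}\<close>.\<close>

definition transient_system_mat :: "nat \<Rightarrow> (nat \<Rightarrow> 'q) \<Rightarrow> (nat \<Rightarrow> real) \<Rightarrow> real mat" where
  "transient_system_mat n e x =
     mat n n (\<lambda>(i, k). of_bool (i = k) - (\<Sum>a\<in>A. x a * of_bool (\<delta> (e i) a = e k)))"

definition exit_vec :: "nat \<Rightarrow> (nat \<Rightarrow> 'q) \<Rightarrow> 'q set \<Rightarrow> (nat \<Rightarrow> real) \<Rightarrow> real Matrix.vec" where
  "exit_vec n e B x = vec n (\<lambda>i. exit_prob B x (e i))"

lemma transient_system_mat_mult_vec:
  assumes e: "bij_betw e {0..<n} T" and "i < n"
  shows "vec_index (transient_system_mat n e x *\<^sub>v vec n (\<lambda>k. Z (e k))) i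
           = Z (e i) - transient_kernel x Z (e i)"
proof -
  have sum_enum: "(\<Sum>k=0..<n. of_bool (c = e k) * Z (e k)) = (if c \<in> T then Z c else 0)" for c
  proof -
    have "(\<Sum>k=0..<n. of_bool (c = e k) * Z (e k)) = (\<Sum>q\<in>T. of_bool (c = q) * Z q)"
      using sum.reindex_bij_betw[OF e, of "\<lambda>q. of_bool (c = q) * Z q"] .
    then show ?thesis
      using finite_T by (simp add: of_bool_def if_distrib[of "\<lambda>y. y * _"] cong: if_cong)
  qed
  have "vec_index (transient_system_mat n e x *\<^sub>v vec n (\<lambda>k. Z (e k))) i
          = (\<Sum>k=0..<n. (of_bool (i = k) - (\<Sum>a\<in>A. x a * of_bool (\<delta> (e i) a = e k))) * Z (e k))"
    using \<open>i < n\<close> by (auto simp: transient_system_mat_def scalar_prod_def intro!: sum.cong)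
  also have "\<dots> = (\<Sum>k=0..<n. of_bool (i = k) * Z (e k))
                  - (\<Sum>k=0..<n. \<Sum>a\<in>A. x a * (of_bool (\<delta> (e i) a = e k) * Z (e k)))"
    by (simp add: left_diff_distrib sum_subtractf sum_distrib_right mult.assoc)
  also have "(\<Sum>k=0..<n. of_bool (i = k) * Z (e k)) = Z (e i)"
    using \<open>i < n\<close> by (simp add: of_bool_def if_distrib[of "\<lambda>y. y * _"] cong: if_cong)
  also have "(\<Sum>k=0..<n. \<Sum>a\<in>A. x a * (of_bool (\<delta> (e i) a = e k) * Z (e k)))
               = transient_kernel x Z (e i)"
    by (subst sum.swap) (simp add: sum_distrib_left[symmetric] sum_enum transient_kernel_def)
  finally show ?thesis .
qed

lemma det_transient_system_mat_nonzero:
  assumes e: "bij_betw e {0..<n} T"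
    and pos: "\<And>a. a \<in> A \<Longrightarrow> 0 < p a" and sum_le: "sum p A \<le> 1"
  shows "det (transient_system_mat n e p) \<noteq> 0"
proof
  assume "det (transient_system_mat n e p) = 0"
  then obtain v where v: "v \<in> carrier_vec n" "v \<noteq> 0\<^sub>v n" "transient_system_mat n e p *\<^sub>v v = 0\<^sub>v n"
    using det_0_iff_vec_prod_zero_field[of "transient_system_mat n e p" n]
    by (auto simp: transient_system_mat_def)
  define Y where "Y q = vec_index v (inv_into {0..<n} e q)" for q
  have v_eq: "v = vec n (\<lambda>k. Y (e k))"
    using v(1) e by (intro eq_vecI) (auto simp: Y_def bij_betw_def inv_into_f_f)
  have fixpoint: "Y q = transient_kernel p Y q" if "q \<in> T" for q
  proof -
    obtain i where "i < n" "e i = q"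
      using bij_betw_imp_surj_on[OF e] \<open>q \<in> T\<close> by (metis atLeastLessThan_iff imageE)
    have "Y q - transient_kernel p Y q = vec_index (transient_system_mat n e p *\<^sub>v v) i"
      using transient_system_mat_mult_vec[OF e \<open>i < n\<close>, of p Y, folded v_eq] \<open>e i = q\<close> by simp
    also have "\<dots> = 0"
      using v(3) \<open>i < n\<close> by simp
    finally show ?thesis by simp
  qed
  have "Y (e k) = 0" if "k < n" for k
    using transient_fixpoint_eq_0[OF pos sum_le fixpoint] bij_betwE[OF e] that by simp
  then have "v = 0\<^sub>v n"
    using v_eq by (intro eq_vecI) auto
  with v(2) show False ..
qed

lemma transient_system_mat_int_poly_fun:
  assumes "A \<subseteq> {1..N}" and "i < n" and "k < n"
  shows "(\<lambda>x. transient_system_mat n e x $$ (i, k)) \<in> int_poly_fun N"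
proof -
  have "(\<lambda>x. transient_system_mat n e x $$ (i, k))
          = (\<lambda>x. of_int (of_bool (i = k)) - (\<Sum>a\<in>A. x a * of_int (of_bool (\<delta> (e i) a = e k))))"
    unfolding transient_system_mat_def
    by (simp only: index_mat[OF assms(2,3)] prod.case of_int_of_bool)
  also have "\<dots> \<in> int_poly_fun N"
    using assms finite_A
    by (intro int_poly_fun_diff int_poly_fun.const int_poly_fun_sum int_poly_fun.mult int_poly_fun.var)
      auto
  finally show ?thesis .
qed

lemma exit_vec_int_poly_fun:
  assumes "A \<subseteq> {1..N}" and "i < n"
  shows "(\<lambda>x. vec_index (exit_vec n e B x) i) \<in> int_poly_fun N"
proof -
  have "(\<lambda>x. vec_index (exit_vec n e B x) i)
          = (\<lambda>x. \<Sum>a\<in>A. x a * of_int (of_bool (\<delta> (e i) a \<in> B - T)))"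
    by (simp only: exit_vec_def index_vec[OF assms(2)] exit_prob_def of_int_of_bool)
  also have "\<dots> \<in> int_poly_fun N"
    using assms finite_A by (intro int_poly_fun_sum int_poly_fun.mult int_poly_fun.var int_poly_fun.const) auto
  finally show ?thesis .
qed

lemma transient_system_mat_mult_solution:
  assumes e: "bij_betw e {0..<n} T"
    and X: "\<And>q. q \<in> T \<Longrightarrow> X q = transient_kernel p X q + exit_prob B p q"
  shows "transient_system_mat n e p *\<^sub>v vec n (\<lambda>k. X (e k)) = exit_vec n e B p"
proof (rule eq_vecI)
  fix i assume "i < dim_vec (exit_vec n e B p)"
  then have "i < n"
    by (simp add: exit_vec_def)
  then have "e i \<in> T"
    using bij_betwE[OF e] by simp
  have "vec_index (transient_system_mat n e p *\<^sub>v vec n (\<lambda>k. X (e k))) i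
          = X (e i) - transient_kernel p X (e i)"
    by (rule transient_system_mat_mult_vec[OF e \<open>i < n\<close>])
  also have "\<dots> = exit_prob B p (e i)"
    using X[OF \<open>e i \<in> T\<close>] by linarith
  also have "\<dots> = vec_index (exit_vec n e B p) i"
    using \<open>i < n\<close> by (simp add: exit_vec_def)
  finally show "vec_index (transient_system_mat n e p *\<^sub>v vec n (\<lambda>k. X (e k))) i
                  = vec_index (exit_vec n e B p) i" .
next
  show "dim_vec (transient_system_mat n e p *\<^sub>v vec n (\<lambda>k. X (e k))) = dim_vec (exit_vec n e B p)"
    by (simp add: exit_vec_def transient_system_mat_def)
qed

lemma absorption_solution_rational:
  assumes "A \<subseteq> {1..N}" and "q0 \<in> T"
  shows "\<exists>g h. g \<in> int_poly_fun N \<and> h \<in> int_poly_fun N \<and>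
           (\<forall>p X. (\<forall>a\<in>A. 0 < p a) \<and> sum p A \<le> 1 \<and>
              (\<forall>q\<in>T. X q = transient_kernel p X q + exit_prob B p q)
              \<longrightarrow> h p \<noteq> 0 \<and> X q0 = g p / h p)"
proof -
  define n where "n = card T"
  obtain e where e: "bij_betw e {0..<n} T"
    using ex_bij_betw_nat_finite[OF finite_T] unfolding n_def by blast
  obtain i0 where "i0 < n" "e i0 = q0"
    using bij_betw_imp_surj_on[OF e] \<open>q0 \<in> T\<close> by (metis atLeastLessThan_iff imageE)
  let ?M = "transient_system_mat n e"
  have carrier: "?M x \<in> carrier_mat n n" for x
    by (simp add: transient_system_mat_def)
  obtain g where g: "g \<in> int_poly_fun N"
    and cramer: "\<And>x v. v \<in> carrier_vec n \<Longrightarrow> ?M x *\<^sub>v v = exit_vec n e B x \<Longrightarrow>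
                   g x = vec_index v i0 * det (?M x)"
    using cramer_numerator_int_poly_fun[OF carrier transient_system_mat_int_poly_fun[OF assms(1)]
        exit_vec_int_poly_fun[OF assms(1)] \<open>i0 < n\<close>] by blast
  have h: "(\<lambda>x. det (?M x)) \<in> int_poly_fun N"
    by (rule int_poly_fun_det[OF carrier transient_system_mat_int_poly_fun[OF assms(1)]])
  have solution: "\<forall>p X. (\<forall>a\<in>A. 0 < p a) \<and> sum p A \<le> 1 \<and>
        (\<forall>q\<in>T. X q = transient_kernel p X q + exit_prob B p q)
        \<longrightarrow> det (?M p) \<noteq> 0 \<and> X q0 = g p / det (?M p)"
  proof (intro allI impI, elim conjE)
    fix p X
    assume pos: "\<forall>a\<in>A. 0 < p a" and sum_le: "sum p A \<le> 1"
      and X: "\<forall>q\<in>T. X q = transient_kernel p X q + exit_prob B p q"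
    have "det (?M p) \<noteq> 0"
      using det_transient_system_mat_nonzero[OF e] pos sum_le by blast
    then show "det (?M p) \<noteq> 0 \<and> X q0 = g p / det (?M p)"
      using cramer[OF vec_carrier transient_system_mat_mult_solution[OF e X[rule_format]]]
        \<open>i0 < n\<close> \<open>e i0 = q0\<close> by simp
  qed
  show ?thesis
    by (intro exI[of _ g] exI[of _ "\<lambda>x. det (?M x)"] conjI g h solution)
qed

end

section \<open>Absorption probabilities of a finite automaton\<close>

lemma open_simplex_pos: "p \<in> open_simplex s \<Longrightarrow> a \<in> alphabet s \<Longrightarrow> 0 < p a"
  by (auto simp: open_simplex_def alphabet_def)

lemma open_simplex_sum: "p \<in> open_simplex s \<Longrightarrow> sum p (alphabet s) = 1"
  by (auto simp: open_simplex_def alphabet_def)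

lemma word_prob_Cons [simp]: "word_prob p (a # w) = p a * word_prob p w"
  by (simp add: word_prob_def)

locale finite_automaton =
  fixes s t :: nat and S :: "'q set" and q0 :: 'q
    and \<delta> :: "'q \<Rightarrow> nat \<Rightarrow> 'q" and SF :: "nat \<Rightarrow> 'q set"
  assumes is_automaton: "is_automaton s t S q0 \<delta> SF"
begin

abbreviation final :: "'q set" where
  "final \<equiv> \<Union>j\<in>{1..t+1}. SF j"

abbreviation lang :: "'q \<Rightarrow> nat \<Rightarrow> nat list set" where
  "lang q \<equiv> automaton_lang s t q \<delta> SF"

definition absorption_prob :: "(nat \<Rightarrow> real) \<Rightarrow> nat \<Rightarrow> 'q \<Rightarrow> real" where
  "absorption_prob p j q = infsum (word_prob p) (lang q j)"

inductive_set reachable :: "'q set" where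
  start: "q0 \<notin> final \<Longrightarrow> q0 \<in> reachable"
| step: "q \<in> reachable \<Longrightarrow> a \<in> alphabet s \<Longrightarrow> \<delta> q a \<notin> final \<Longrightarrow> \<delta> q a \<in> reachable"

definition coreachable :: "'q \<Rightarrow> bool" where
  "coreachable q \<longleftrightarrow> (\<exists>v. set v \<subseteq> alphabet s \<and> run \<delta> q v \<in> final)"

text \<open>Reachability is needed only so that the summability of the series from \<open>q0\<close>
  passes to the series from the other states.\<close>

definition transient :: "'q set" where
  "transient = {q \<in> reachable. coreachable q}"

lemma reachable_not_final: "q \<in> reachable \<Longrightarrow> q \<notin> final"
  by (induction rule: reachable.induct) auto

lemma reachable_subset: "reachable \<subseteq> S"
proof
  fix q assume "q \<in> reachable"
  then show "q \<in> S"
    using is_automaton by (induction rule: reachable.induct) (auto simp: is_automaton_def)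
qed

sublocale absorbing_chain "alphabet s" \<delta> transient
proof
  show "finite (alphabet s)"
    by (simp add: alphabet_def)
  have "transient \<subseteq> S"
    using reachable_subset by (auto simp: transient_def)
  then show "finite transient"
    using is_automaton finite_subset by (auto simp: is_automaton_def)
  fix q assume "q \<in> transient"
  then obtain v where "set v \<subseteq> alphabet s" "run \<delta> q v \<in> final"
    by (auto simp: transient_def coreachable_def)
  then show "\<exists>v. set v \<subseteq> alphabet s \<and> run \<delta> q v \<notin> transient"
    using reachable_not_final by (auto simp: transient_def)
qed

lemma final_disjoint:
  "i \<in> {1..t+1} \<Longrightarrow> j \<in> {1..t+1} \<Longrightarrow> r \<in> SF i \<Longrightarrow> r \<in> SF j \<Longrightarrow> i = j"
  using is_automaton unfolding is_automaton_def by blast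

lemma automaton_lang_final:
  assumes "i \<in> {1..t+1}" "r \<in> SF i" "j \<in> {1..t+1}"
  shows "lang r j = (if i = j then {[]} else {})"
proof -
  have "w = []" if "w \<in> lang r j" for w
    using that assms by (cases w) (auto simp: automaton_lang_def All_less_Suc2)
  moreover have "[] \<in> lang r j \<longleftrightarrow> i = j"
    using assms final_disjoint by (auto simp: automaton_lang_def)
  ultimately show ?thesis
    by auto
qed

lemma automaton_lang_not_coreachable:
  "\<not> coreachable r \<Longrightarrow> j \<in> {1..t+1} \<Longrightarrow> lang r j = {}"
  by (auto simp: automaton_lang_def coreachable_def)

lemma Cons_in_automaton_lang:
  "r \<notin> final \<Longrightarrow> a # w \<in> lang r j \<longleftrightarrow> a \<in> alphabet s \<and> w \<in> lang (\<delta> r a) j"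
  by (auto simp: automaton_lang_def All_less_Suc2)

lemma automaton_lang_Cons_bij:
  assumes "r \<notin> final" "j \<in> {1..t+1}"
  shows "bij_betw (\<lambda>(a, w). a # w) (SIGMA a:alphabet s. lang (\<delta> r a) j) (lang r j)"
proof (rule bij_betw_imageI)
  show "inj_on (\<lambda>(a, w). a # w) (SIGMA a:alphabet s. lang (\<delta> r a) j)"
    by (auto simp: inj_on_def)
  show "(\<lambda>(a, w). a # w) ` (SIGMA a:alphabet s. lang (\<delta> r a) j) = lang r j"
  proof (intro equalityI subsetI)
    fix y assume "y \<in> (\<lambda>(a, w). a # w) ` (SIGMA a:alphabet s. lang (\<delta> r a) j)"
    then show "y \<in> lang r j"
      using Cons_in_automaton_lang[OF assms(1)] by auto
  next
    fix y assume y: "y \<in> lang r j"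
    moreover have "[] \<notin> lang r j"
      using assms by (auto simp: automaton_lang_def)
    ultimately obtain a w where "y = a # w"
      by (cases y) auto
    with y show "y \<in> (\<lambda>(a, w). a # w) ` (SIGMA a:alphabet s. lang (\<delta> r a) j)"
      using Cons_in_automaton_lang[OF assms(1)] by (intro rev_image_eqI[of "(a, w)"]) auto
  qed
qed

lemma summable_on_automaton_lang_Sigma:
  assumes "r \<notin> final" "j \<in> {1..t+1}" and "word_prob p summable_on lang r j"
  shows "(\<lambda>(a, w). word_prob p (a # w)) summable_on (SIGMA a:alphabet s. lang (\<delta> r a) j)"
  using summable_on_reindex_bij_betw[OF automaton_lang_Cons_bij[OF assms(1,2)], of "word_prob p"]
    assms(3) by (simp add: case_prod_unfold)

lemma summable_on_automaton_lang_step: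
  assumes "r \<notin> final" "j \<in> {1..t+1}" and "word_prob p summable_on lang r j"
    and "a \<in> alphabet s" "p a \<noteq> 0"
  shows "word_prob p summable_on lang (\<delta> r a) j"
proof -
  have "(\<lambda>w. p a * word_prob p w) summable_on lang (\<delta> r a) j"
    using summable_on_SigmaD1[OF summable_on_automaton_lang_Sigma[OF assms(1-3)] \<open>a \<in> alphabet s\<close>]
    by simp
  then show ?thesis
    using summable_on_cmult_right' \<open>p a \<noteq> 0\<close> by blast
qed

lemma absorption_prob_step:
  assumes "r \<notin> final" "j \<in> {1..t+1}" and "word_prob p summable_on lang r j"
  shows "absorption_prob p j r = (\<Sum>a\<in>alphabet s. p a * absorption_prob p j (\<delta> r a))"
proof -
  have "absorption_prob p j r
          = infsum (\<lambda>(a, w). word_prob p (a # w)) (SIGMA a:alphabet s. lang (\<delta> r a) j)"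
    unfolding absorption_prob_def
    using infsum_reindex_bij_betw[OF automaton_lang_Cons_bij[OF assms(1,2)], of "word_prob p"]
    by (simp add: case_prod_unfold)
  also have "\<dots> = (\<Sum>a\<in>alphabet s. infsum (\<lambda>w. word_prob p (a # w)) (lang (\<delta> r a) j))"
    using infsum_Sigma'_banach[OF summable_on_automaton_lang_Sigma[OF assms]]
    by (simp add: alphabet_def)
  also have "\<dots> = (\<Sum>a\<in>alphabet s. p a * absorption_prob p j (\<delta> r a))"
    by (simp add: absorption_prob_def infsum_cmult_right')
  finally show ?thesis .
qed

lemma summable_on_automaton_lang_reachable:
  assumes "q \<in> reachable" "p \<in> open_simplex s" "j \<in> {1..t+1}"
    and "word_prob p summable_on lang q0 j"
  shows "word_prob p summable_on lang q j"
  using assms(1)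
proof (induction rule: reachable.induct)
  case (step q a)
  show ?case
    using summable_on_automaton_lang_step[OF reachable_not_final[OF step.hyps(1)] assms(3) step.IH
        step.hyps(2)] open_simplex_pos[OF assms(2) step.hyps(2)] by simp
qed (use assms(4) in simp)

lemma absorption_prob_not_transient:
  assumes j: "j \<in> {1..t+1}" and "r \<in> final \<or> r \<in> reachable" and "r \<notin> transient"
  shows "absorption_prob p j r = of_bool (r \<in> SF j)"
proof (cases "r \<in> final")
  case True
  then obtain i where i: "i \<in> {1..t+1}" "r \<in> SF i"
    by blast
  then have "r \<in> SF j \<longleftrightarrow> i = j"
    using final_disjoint[OF i(1) j i(2)] by auto
  then show ?thesis
    using automaton_lang_final[OF i j] by (simp add: absorption_prob_def word_prob_def)
next
  case False
  with assms have "\<not> coreachable r"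
    by (auto simp: transient_def)
  then show ?thesis
    using False j automaton_lang_not_coreachable[OF _ j] by (auto simp: absorption_prob_def)
qed

lemma absorption_prob_transient_eq:
  assumes p: "p \<in> open_simplex s" and j: "j \<in> {1..t+1}" and "q \<in> transient"
    and summable: "word_prob p summable_on lang q0 j"
  shows "absorption_prob p j q
           = transient_kernel p (absorption_prob p j) q + exit_prob (SF j) p q"
proof -
  let ?X = "absorption_prob p j"
  have q: "q \<in> reachable"
    using \<open>q \<in> transient\<close> by (simp add: transient_def)
  have split: "p a * ?X (\<delta> q a)
          = p a * (if \<delta> q a \<in> transient then ?X (\<delta> q a) else 0)
            + p a * of_bool (\<delta> q a \<in> SF j - transient)" if "a \<in> alphabet s" for a
  proof (cases "\<delta> q a \<in> transient")
    case False
    have "\<delta> q a \<in> final \<or> \<delta> q a \<in> reachable"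
      using reachable.step[OF q that] by blast
    from absorption_prob_not_transient[OF j this False] False show ?thesis
      by simp
  qed simp
  have "?X q = (\<Sum>a\<in>alphabet s. p a * ?X (\<delta> q a))"
    using absorption_prob_step[OF reachable_not_final[OF q] j
        summable_on_automaton_lang_reachable[OF q p j summable]] .
  also have "\<dots> = (\<Sum>a\<in>alphabet s. p a * (if \<delta> q a \<in> transient then ?X (\<delta> q a) else 0)
                      + p a * of_bool (\<delta> q a \<in> SF j - transient))"
    using split by (rule sum.cong[OF refl])
  also have "\<dots> = transient_kernel p ?X q + exit_prob (SF j) p q"
    by (simp add: transient_kernel_def exit_prob_def sum.distrib)
  finally show ?thesis .
qed

lemma absorption_prob_rational:
  assumes j: "j \<in> {1..t+1}"
    and summable: "\<And>p. p \<in> open_simplex s \<Longrightarrow> word_prob p summable_on lang q0 j"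
  shows "\<exists>g h. g \<in> int_poly_fun (s+1) \<and> h \<in> int_poly_fun (s+1) \<and>
           (\<forall>p\<in>open_simplex s. h p \<noteq> 0 \<and> absorption_prob p j q0 = g p / h p)"
proof (cases "q0 \<in> transient")
  case True
  have "alphabet s \<subseteq> {1..s+1}"
    by (simp add: alphabet_def)
  from absorption_solution_rational[OF this True, of "SF j"]
  obtain g h where "g \<in> int_poly_fun (s+1)" "h \<in> int_poly_fun (s+1)"
    and solve: "\<And>p X. (\<forall>a\<in>alphabet s. 0 < p a) \<Longrightarrow> sum p (alphabet s) \<le> 1 \<Longrightarrow>
        (\<forall>q\<in>transient. X q = transient_kernel p X q + exit_prob (SF j) p q) \<Longrightarrow>
        h p \<noteq> 0 \<and> X q0 = g p / h p"
    by blast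
  moreover have "h p \<noteq> 0 \<and> absorption_prob p j q0 = g p / h p" if p: "p \<in> open_simplex s" for p
  proof (rule solve)
    show "\<forall>a\<in>alphabet s. 0 < p a"
      using open_simplex_pos[OF p] by blast
    show "sum p (alphabet s) \<le> 1"
      using open_simplex_sum[OF p] by simp
    show "\<forall>q\<in>transient. absorption_prob p j q
            = transient_kernel p (absorption_prob p j) q + exit_prob (SF j) p q"
      using absorption_prob_transient_eq[OF p j _ summable[OF p]] by blast
  qed
  ultimately show ?thesis by blast
next
  case False
  have "q0 \<in> final \<or> q0 \<in> reachable"
    using reachable.start by blast
  from absorption_prob_not_transient[OF j this False]
  have const: "absorption_prob p j q0 = of_bool (q0 \<in> SF j)" for p .
  show ?thesis
    by (intro exI[of _ "\<lambda>x. of_bool (q0 \<in> SF j)"] exI[of _ "\<lambda>x. 1"])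
      (use const int_poly_fun.const[of "of_bool (q0 \<in> SF j)"] int_poly_fun.const[of 1] in simp)
qed
end

theorem proposition2p8:
  fixes s t :: nat
    and f :: "nat \<Rightarrow> (nat \<Rightarrow> real) \<Rightarrow> real"
    and S :: "'q set" and q0 :: 'q and \<delta> :: "'q \<Rightarrow> nat \<Rightarrow> 'q" and SF :: "nat \<Rightarrow> 'q set"
  assumes "s \<ge> 1" and "t \<ge> 1"
    and "\<forall>p\<in>open_simplex s. (\<forall>j\<in>{1..t+1}. 0 < f j p \<and> f j p < 1) \<and> (\<Sum>j=1..t+1. f j p) = 1"
    and "automaton_simulates s t S q0 \<delta> SF f"
  shows "\<forall>j\<in>{1..t+1}. \<exists>g h. g \<in> int_poly_fun (s+1) \<and> h \<in> int_poly_fun (s+1)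
            \<and> (\<forall>p\<in>open_simplex s. h p \<noteq> 0 \<and> f j p = g p / h p)"
proof
  \<comment> \<open>The bounds on \<open>s\<close>, \<open>t\<close> and on the values of \<open>f\<close> are not needed.\<close>
  fix j assume j: "j \<in> {1..t+1}"
  interpret finite_automaton s t S q0 \<delta> SF
    using assms(4) by unfold_locales (simp add: automaton_simulates_def)
  have has_sum: "(word_prob p has_sum f j p) (lang q0 j)" if "p \<in> open_simplex s" for p
    using assms(4) j that by (simp add: automaton_simulates_def simulation_def)
  have summable: "word_prob p summable_on lang q0 j" if "p \<in> open_simplex s" for p
    using has_sum[OF that] by (auto simp: summable_on_def)
  obtain g h where g: "g \<in> int_poly_fun (s+1)" and h: "h \<in> int_poly_fun (s+1)"
    and quotient: "\<forall>p\<in>open_simplex s. h p \<noteq> 0 \<and> absorption_prob p j q0 = g p / h p"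
    using absorption_prob_rational[OF j summable] by blast
  have "absorption_prob p j q0 = f j p" if "p \<in> open_simplex s" for p
    using infsumI[OF has_sum[OF that]] by (simp add: absorption_prob_def)
  with g h quotient show "\<exists>g h. g \<in> int_poly_fun (s+1) \<and> h \<in> int_poly_fun (s+1)
            \<and> (\<forall>p\<in>open_simplex s. h p \<noteq> 0 \<and> f j p = g p / h p)"
    by auto
qed

end
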